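(* Let $Y$ be a solid vector space and $(X,d)$ a cone metric space over $Y$. Then $(X,d)$ is complete if and only if every nested sequence $\overline U(x_1,r_1)\supseteq\overline U(x_2,r_2)\supseteq\cdots$ of closed balls in $X$ with $r_n\to0$ in $Y$ has nonempty intersection.
   Context: Vector space with convergence: a real vector space $Y$ with a relation $\to$ between sequences in $Y$ and points of $Y$ (uniqueness of limits not assumed) such that (C1) $x_n\to x$, $y_n\to y$ imply $x_n+y_n\to x+y$; (C2) $x_n\to x$, $\lambda\in\mathbb R$ imply $\lambda x_n\to\lambda x$; (C3) $\lambda_n\to\lambda$ in $\mathbb R$ imply $\lambda_n x\to\lambda x$. $A\subseteq Y$ is open if $x_n\to x\in A$ implies $x_n\in A$ for all but finitely many $n$; closed if $x_n\to x$, $x_n\in A$ $\forall n$ imply $x\in A$; $A^\circ$ is the union of all open subsets of $A$. A cone is a nonempty closed $K$ with $\lambda K\subseteq K$ ($\lambda\ge0$), $K+K\subseteq K$, $K\cap(-K)=\{0\}$; solid if $K\ne\{0\}$, $K^\circ\neq\emptyset$. A vector ordering is a partial order $\preceq$ with (V1) $x\preceq y\Rightarrow x+z\preceq y+z$; (V2) $\lambda\ge0$, $x\preceq y\Rightarrow\lambda x\preceq\lambda y$; (V3) $x_n\to x$, $y_n\to y$, $x_n\preceq y_n$ $\forall n\Rightarrow x\preceq y$. Solid vector space: positive cone $K=\{x:x\succeq 0\}$ solid, with $x\prec y$ iff $y-x\in K^\circ$. Cone metric space over $Y$: nonempty $X$ with $d\colon X\times X\to Y$, $d(x,y)\succeq0$,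 $d(x,y)=0$ iff $x=y$, $d(x,y)=d(y,x)$, $d(x,y)\preceq d(x,z)+d(z,y)$. $X$ carries the topology with basis $U(x,r)=\{y:d(y,x)\prec r\}$ ($r\succ0$), so $x_n\to x$ iff for each $c\succ0$, $d(x_n,x)\prec c$ for all but finitely many $n$. Closed ball $\overline U(x,r)=\{y:d(y,x)\preceq r\}$ for $r\succeq0$. Cauchy: for every $c\succ0$ there is $N$ with $d(x_n,x_m)\prec c$ for $n,m>N$; complete: every Cauchy sequence converges. *)

theory Defs
  imports Main "HOL-Analysis.Analysis"
begin

text \<open>Vector space with convergence: the convergence relation is an explicit parameter
  cv :: (nat => 'y) => 'y => bool on a real vector space 'y (limits need not be unique).\<close>

definition vs_conv :: "((nat \<Rightarrow> 'y::real_vector) \<Rightarrow> 'y \<Rightarrow> bool) \<Rightarrow> bool" where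
  "vs_conv cv \<longleftrightarrow>
     (\<forall>xs ys x y. cv xs x \<and> cv ys y \<longrightarrow> cv (\<lambda>n. xs n + ys n) (x + y)) \<and>
     (\<forall>xs x (l::real). cv xs x \<longrightarrow> cv (\<lambda>n. l *\<^sub>R xs n) (l *\<^sub>R x)) \<and>
     (\<forall>(ls::nat \<Rightarrow> real) l x. ls \<longlonglongrightarrow> l \<longrightarrow> cv (\<lambda>n. ls n *\<^sub>R x) (l *\<^sub>R x))"

definition cv_open :: "((nat \<Rightarrow> 'y) \<Rightarrow> 'y \<Rightarrow> bool) \<Rightarrow> 'y set \<Rightarrow> bool" where
  "cv_open cv A \<longleftrightarrow> (\<forall>xs x. cv xs x \<and> x \<in> A \<longrightarrow> (\<forall>\<^sub>F n in sequentially. xs n \<in> A))"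

definition cv_closed :: "((nat \<Rightarrow> 'y) \<Rightarrow> 'y \<Rightarrow> bool) \<Rightarrow> 'y set \<Rightarrow> bool" where
  "cv_closed cv A \<longleftrightarrow> (\<forall>xs x. cv xs x \<and> (\<forall>n. xs n \<in> A) \<longrightarrow> x \<in> A)"

definition cv_interior :: "((nat \<Rightarrow> 'y) \<Rightarrow> 'y \<Rightarrow> bool) \<Rightarrow> 'y set \<Rightarrow> 'y set" where
  "cv_interior cv A = \<Union>{U. U \<subseteq> A \<and> cv_open cv U}"

definition is_cone :: "((nat \<Rightarrow> 'y::real_vector) \<Rightarrow> 'y \<Rightarrow> bool) \<Rightarrow> 'y set \<Rightarrow> bool" where
  "is_cone cv K \<longleftrightarrow> K \<noteq> {} \<and> cv_closed cv K \<and>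
     (\<forall>(l::real) x. l \<ge> 0 \<and> x \<in> K \<longrightarrow> l *\<^sub>R x \<in> K) \<and>
     (\<forall>x y. x \<in> K \<and> y \<in> K \<longrightarrow> x + y \<in> K) \<and>
     K \<inter> uminus ` K = {0}"

definition solid_cone :: "((nat \<Rightarrow> 'y::real_vector) \<Rightarrow> 'y \<Rightarrow> bool) \<Rightarrow> 'y set \<Rightarrow> bool" where
  "solid_cone cv K \<longleftrightarrow> is_cone cv K \<and> K \<noteq> {0} \<and> cv_interior cv K \<noteq> {}"

definition vector_ordering ::
  "((nat \<Rightarrow> 'y::real_vector) \<Rightarrow> 'y \<Rightarrow> bool) \<Rightarrow> ('y \<Rightarrow> 'y \<Rightarrow> bool) \<Rightarrow> bool" where
  "vector_ordering cv le \<longleftrightarrow>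
     (\<forall>x. le x x) \<and> (\<forall>x y. le x y \<and> le y x \<longrightarrow> x = y) \<and>
     (\<forall>x y z. le x y \<and> le y z \<longrightarrow> le x z) \<and>
     (\<forall>x y z. le x y \<longrightarrow> le (x + z) (y + z)) \<and>
     (\<forall>(l::real) x y. l \<ge> 0 \<and> le x y \<longrightarrow> le (l *\<^sub>R x) (l *\<^sub>R y)) \<and>
     (\<forall>xs ys x y. cv xs x \<and> cv ys y \<and> (\<forall>n. le (xs n) (ys n)) \<longrightarrow> le x y)"

definition solid_vector_space ::
  "((nat \<Rightarrow> 'y::real_vector) \<Rightarrow> 'y \<Rightarrow> bool) \<Rightarrow> ('y \<Rightarrow> 'y \<Rightarrow> bool) \<Rightarrow> bool" where
  "solid_vector_space cv le \<longleftrightarrow> vs_conv cv \<and> vector_ordering cv le \<and> solid_cone cv {x. le 0 x}"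

definition sv_less ::
  "((nat \<Rightarrow> 'y::real_vector) \<Rightarrow> 'y \<Rightarrow> bool) \<Rightarrow> ('y \<Rightarrow> 'y \<Rightarrow> bool) \<Rightarrow> 'y \<Rightarrow> 'y \<Rightarrow> bool" where
  "sv_less cv le x y \<longleftrightarrow> y - x \<in> cv_interior cv {z. le 0 z}"

definition cone_metric :: "('y::real_vector \<Rightarrow> 'y \<Rightarrow> bool) \<Rightarrow> ('x \<Rightarrow> 'x \<Rightarrow> 'y) \<Rightarrow> bool" where
  "cone_metric le d \<longleftrightarrow>
     (\<forall>x y. le 0 (d x y)) \<and> (\<forall>x y. d x y = 0 \<longleftrightarrow> x = y) \<and>
     (\<forall>x y. d x y = d y x) \<and> (\<forall>x y z. le (d x y) (d x z + d z y))"

definition cm_tendsto ::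
  "((nat \<Rightarrow> 'y::real_vector) \<Rightarrow> 'y \<Rightarrow> bool) \<Rightarrow> ('y \<Rightarrow> 'y \<Rightarrow> bool) \<Rightarrow> ('x \<Rightarrow> 'x \<Rightarrow> 'y)
    \<Rightarrow> (nat \<Rightarrow> 'x) \<Rightarrow> 'x \<Rightarrow> bool" where
  "cm_tendsto cv le d s x \<longleftrightarrow>
     (\<forall>c. sv_less cv le 0 c \<longrightarrow> (\<forall>\<^sub>F n in sequentially. sv_less cv le (d (s n) x) c))"

definition cm_Cauchy ::
  "((nat \<Rightarrow> 'y::real_vector) \<Rightarrow> 'y \<Rightarrow> bool) \<Rightarrow> ('y \<Rightarrow> 'y \<Rightarrow> bool) \<Rightarrow> ('x \<Rightarrow> 'x \<Rightarrow> 'y)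
    \<Rightarrow> (nat \<Rightarrow> 'x) \<Rightarrow> bool" where
  "cm_Cauchy cv le d s \<longleftrightarrow>
     (\<forall>c. sv_less cv le 0 c \<longrightarrow> (\<exists>N. \<forall>n m. n > N \<and> m > N \<longrightarrow> sv_less cv le (d (s n) (s m)) c))"

definition cm_complete ::
  "((nat \<Rightarrow> 'y::real_vector) \<Rightarrow> 'y \<Rightarrow> bool) \<Rightarrow> ('y \<Rightarrow> 'y \<Rightarrow> bool) \<Rightarrow> ('x \<Rightarrow> 'x \<Rightarrow> 'y) \<Rightarrow> bool" where
  "cm_complete cv le d \<longleftrightarrow> (\<forall>s. cm_Cauchy cv le d s \<longrightarrow> (\<exists>x. cm_tendsto cv le d s x))"

definition cm_cball :: "('y \<Rightarrow> 'y \<Rightarrow> bool) \<Rightarrow> ('x \<Rightarrow> 'x \<Rightarrow> 'y) \<Rightarrow> 'x \<Rightarrow> 'y \<Rightarrow> 'x set" where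
  "cm_cball le d x r = {y. le (d y x) r}"

end

theory Submission
  imports Defs
begin

text \<open>Completeness implies the nested ball property: the centres of a nested sequence of closed
  balls with radii tending to 0 form a Cauchy sequence, and since closed balls are sequentially
  closed its limit lies in every ball. Conversely, a Cauchy sequence has a subsequence with
  d(s n, s (N k)) \<preceq> 2^-k e for n \<ge> N k, where e \<succ> 0 is fixed; the balls around s (N k) of
  radius 2^(1-k) e are nested, and a common point of them is the limit of the whole sequence.\<close>

context
  fixes cv :: "(nat \<Rightarrow> 'y::real_vector) \<Rightarrow> 'y \<Rightarrow> bool"
    and le :: "'y \<Rightarrow> 'y \<Rightarrow> bool"
  assumes solid: "solid_vector_space cv le"
begin

lemma sv_conv_add: "cv xs x \<Longrightarrow> cv ys y \<Longrightarrow> cv (\<lambda>n. xs n + ys n) (x + y)"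
  using solid unfolding solid_vector_space_def vs_conv_def by blast

lemma sv_conv_scaleR: "cv xs x \<Longrightarrow> cv (\<lambda>n. l *\<^sub>R xs n) (l *\<^sub>R x)"
  using solid unfolding solid_vector_space_def vs_conv_def by blast

lemma sv_conv_scaleR_left: "ls \<longlonglongrightarrow> l \<Longrightarrow> cv (\<lambda>n. ls n *\<^sub>R x) (l *\<^sub>R x)"
  using solid unfolding solid_vector_space_def vs_conv_def by blast

lemma sv_conv_scaleR_left_zero: "ls \<longlonglongrightarrow> 0 \<Longrightarrow> cv (\<lambda>n. ls n *\<^sub>R x) 0"
  using sv_conv_scaleR_left[of ls 0 x] by simp

lemma sv_conv_const: "cv (\<lambda>n. x) x"
  using sv_conv_scaleR_left[of "\<lambda>n. 1" 1 x] by simp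

lemma sv_le_trans: "le x y \<Longrightarrow> le y z \<Longrightarrow> le x z"
  using solid unfolding solid_vector_space_def vector_ordering_def by blast

lemma sv_le_add_right: "le x y \<Longrightarrow> le (x + z) (y + z)"
  using solid unfolding solid_vector_space_def vector_ordering_def by blast

lemma sv_le_scaleR: "l \<ge> 0 \<Longrightarrow> le x y \<Longrightarrow> le (l *\<^sub>R x) (l *\<^sub>R y)"
  using solid unfolding solid_vector_space_def vector_ordering_def by blast

lemma sv_le_limit: "cv xs x \<Longrightarrow> cv ys y \<Longrightarrow> (\<And>n. le (xs n) (ys n)) \<Longrightarrow> le x y"
  using solid unfolding solid_vector_space_def vector_ordering_def by blast

lemma sv_le_add_mono: "le a b \<Longrightarrow> le c e \<Longrightarrow> le (a + c) (b + e)"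
  using sv_le_trans sv_le_add_right[of a b c] sv_le_add_right[of c e b] by (simp add: add.commute)

lemma sv_le_iff_nonneg_diff: "le x y \<longleftrightarrow> le 0 (y - x)"
  using sv_le_add_right[of x y "-x"] sv_le_add_right[of 0 "y - x" x] by auto

lemma sv_nonneg_scaleR: "t \<ge> 0 \<Longrightarrow> le 0 e \<Longrightarrow> le 0 (t *\<^sub>R e)"
  using sv_le_scaleR[of t 0 e] by simp

lemma sv_le_of_le_plus_inverse:
  assumes "\<And>k. le a (b + inverse (real (Suc k)) *\<^sub>R e)"
  shows "le a b"
proof -
  have "cv (\<lambda>k. b + inverse (real (Suc k)) *\<^sub>R e) (b + 0)"
    by (rule sv_conv_add[OF sv_conv_const sv_conv_scaleR_left_zero[OF LIMSEQ_inverse_real_of_nat]])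
  then show ?thesis
    using sv_le_limit[OF sv_conv_const] assms by fastforce
qed

lemma sv_less_imp_le: "sv_less cv le x y \<Longrightarrow> le x y"
  unfolding sv_less_def cv_interior_def using sv_le_iff_nonneg_diff by blast

lemma sv_less_ex_pos: "\<exists>e. sv_less cv le 0 e"
  using solid unfolding solid_vector_space_def solid_cone_def sv_less_def by auto

lemma sv_interior_eventually:
  assumes "cv xs x" "x \<in> cv_interior cv A"
  shows "\<forall>\<^sub>F n in sequentially. xs n \<in> cv_interior cv A"
proof -
  obtain U where U: "U \<subseteq> A" "cv_open cv U" "x \<in> U"
    using assms(2) unfolding cv_interior_def by blast
  then have "\<forall>\<^sub>F n in sequentially. xs n \<in> U"
    using assms(1) unfolding cv_open_def by blast
  then show ?thesis
    by (rule eventually_mono) (use U in \<open>auto simp: cv_interior_def\<close>)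
qed

lemma sv_less_eventually:
  assumes "sv_less cv le 0 c" "cv u 0"
  shows "\<forall>\<^sub>F n in sequentially. sv_less cv le (u n) c"
proof -
  have "cv (\<lambda>n. c + (-1) *\<^sub>R u n) (c + (-1) *\<^sub>R 0)"
    by (rule sv_conv_add[OF sv_conv_const sv_conv_scaleR[OF assms(2)]])
  then show ?thesis
    using sv_interior_eventually assms(1) unfolding sv_less_def by simp
qed

text \<open>Both of the following hold because the interior of the positive cone is stable under the
  operation in question: its image is open (by (C1), resp. (C2), applied to the inverse
  operation) and contained in the cone.\<close>

lemma sv_le_less_trans:
  assumes "le x y" "sv_less cv le y z"
  shows "sv_less cv le x z"
proof -
  let ?I = "cv_interior cv {w. le 0 w}"
  define a where "a = y - x"
  have a: "le 0 a" using assms(1) sv_le_iff_nonneg_diff a_def by simp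
  define V where "V = (\<lambda>w. w + a) ` ?I"
  have "cv_open cv V" unfolding cv_open_def
  proof (intro allI impI)
    fix xs v assume h: "cv xs v \<and> v \<in> V"
    then obtain u where u: "u \<in> ?I" "v = u + a" unfolding V_def by blast
    have "cv (\<lambda>n. xs n + (-a)) (v + (-a))" using sv_conv_add[OF _ sv_conv_const] h by blast
    then have "\<forall>\<^sub>F n in sequentially. xs n + (-a) \<in> ?I" using sv_interior_eventually u by simp
    then show "\<forall>\<^sub>F n in sequentially. xs n \<in> V"
      by (rule eventually_mono) (force simp: V_def image_iff)
  qed
  moreover have "V \<subseteq> {w. le 0 w}"
  proof
    fix v assume "v \<in> V"
    then obtain u where u: "u \<in> ?I" "v = u + a" unfolding V_def by blast
    then have "le a (u + a)" using sv_le_add_right[of 0 u a] unfolding cv_interior_def by auto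
    then show "v \<in> {w. le 0 w}" using sv_le_trans[OF a] u by simp
  qed
  ultimately have "V \<subseteq> ?I" unfolding cv_interior_def by blast
  moreover have "z - x \<in> V"
    using assms(2) unfolding V_def a_def sv_less_def by (force simp: image_iff)
  ultimately show ?thesis unfolding sv_less_def by blast
qed

lemma sv_less_scaleR_pos:
  assumes "t > 0" "sv_less cv le 0 e"
  shows "sv_less cv le 0 (t *\<^sub>R e)"
proof -
  let ?I = "cv_interior cv {w. le 0 w}"
  define V where "V = (\<lambda>w. t *\<^sub>R w) ` ?I"
  have "cv_open cv V" unfolding cv_open_def
  proof (intro allI impI)
    fix xs v assume h: "cv xs v \<and> v \<in> V"
    then obtain u where u: "u \<in> ?I" "v = t *\<^sub>R u" unfolding V_def by blast
    have "cv (\<lambda>n. (1/t) *\<^sub>R xs n) ((1/t) *\<^sub>R v)" using sv_conv_scaleR h by blast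
    then have "\<forall>\<^sub>F n in sequentially. (1/t) *\<^sub>R xs n \<in> ?I"
      using sv_interior_eventually u assms(1) by simp
    then show "\<forall>\<^sub>F n in sequentially. xs n \<in> V"
    proof (rule eventually_mono)
      fix n assume "(1/t) *\<^sub>R xs n \<in> ?I"
      moreover have "xs n = t *\<^sub>R ((1/t) *\<^sub>R xs n)" using assms(1) by simp
      ultimately show "xs n \<in> V" unfolding V_def by blast
    qed
  qed
  moreover have "V \<subseteq> {w. le 0 w}"
    using sv_nonneg_scaleR assms(1) unfolding V_def cv_interior_def by auto
  ultimately have "V \<subseteq> ?I" unfolding cv_interior_def by blast
  moreover have "t *\<^sub>R e \<in> V" using assms(2) unfolding V_def sv_less_def by auto
  ultimately show ?thesis unfolding sv_less_def by auto
qed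

context
  fixes d :: "'x \<Rightarrow> 'x \<Rightarrow> 'y"
  assumes metric: "cone_metric le d"
begin

lemma cm_dist_self: "d x x = 0"
  using metric unfolding cone_metric_def by auto

lemma cm_dist_commute: "d x y = d y x"
  using metric unfolding cone_metric_def by auto

lemma cm_triangle_le:
  assumes "le (d x z) a" "le (d z y) b"
  shows "le (d x y) (a + b)"
  using metric sv_le_trans sv_le_add_mono[OF assms] unfolding cone_metric_def by blast

lemma cm_Cauchy_if_dist_le_null:
  assumes "cv r 0" and "\<And>n m. n \<le> m \<Longrightarrow> le (d (s m) (s n)) (r n)"
  shows "cm_Cauchy cv le d s"
  unfolding cm_Cauchy_def
proof (intro allI impI)
  fix e assume e: "sv_less cv le 0 e"
  obtain N where N: "\<And>n. n \<ge> N \<Longrightarrow> sv_less cv le (r n) e"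
    using sv_less_eventually[OF e assms(1)] unfolding eventually_sequentially by blast
  have "sv_less cv le (d (s n) (s m)) e" if "N < n" "N < m" for n m
  proof (cases "n \<le> m")
    case True
    then show ?thesis
      using sv_le_less_trans[OF assms(2)[OF True] N[of n]] that cm_dist_commute by simp
  next
    case False
    then show ?thesis using sv_le_less_trans[OF assms(2) N[of m]] that by simp
  qed
  then show "\<exists>N. \<forall>n m. N < n \<and> N < m \<longrightarrow> sv_less cv le (d (s n) (s m)) e" by blast
qed

lemma cm_cball_closed:
  assumes "cm_tendsto cv le d s x" and "\<forall>\<^sub>F n in sequentially. s n \<in> cm_cball le d y r"
  shows "x \<in> cm_cball le d y r"
proof -
  obtain e where e: "sv_less cv le 0 e" using sv_less_ex_pos by blast
  have "le (d x y) (r + inverse (real (Suc k)) *\<^sub>R e)" for k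
  proof -
    have "sv_less cv le 0 (inverse (real (Suc k)) *\<^sub>R e)"
      using sv_less_scaleR_pos[OF _ e] by simp
    then have "\<forall>\<^sub>F n in sequentially.
        sv_less cv le (d (s n) x) (inverse (real (Suc k)) *\<^sub>R e) \<and> s n \<in> cm_cball le d y r"
      using assms unfolding cm_tendsto_def by (simp add: eventually_conj)
    then obtain n where "sv_less cv le (d (s n) x) (inverse (real (Suc k)) *\<^sub>R e)"
        and "le (d (s n) y) r"
      unfolding eventually_sequentially cm_cball_def by blast
    then have "le (d x (s n)) (inverse (real (Suc k)) *\<^sub>R e)" "le (d (s n) y) r"
      using sv_less_imp_le cm_dist_commute by auto
    then have "le (d x y) (inverse (real (Suc k)) *\<^sub>R e + r)" by (rule cm_triangle_le)
    then show ?thesis by (simp only: add.commute)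
  qed
  then have "le (d x y) r" by (rule sv_le_of_le_plus_inverse)
  then show ?thesis unfolding cm_cball_def by simp
qed

lemma cm_tendsto_if_eventually_le:
  assumes "cv b 0" and "\<And>k. \<forall>\<^sub>F n in sequentially. le (d (s n) x) (b k)"
  shows "cm_tendsto cv le d s x"
  unfolding cm_tendsto_def
proof (intro allI impI)
  fix c assume "sv_less cv le 0 c"
  then obtain k where "sv_less cv le (b k) c"
    using sv_less_eventually[OF _ assms(1)] eventually_sequentially by (meson order_refl)
  show "\<forall>\<^sub>F n in sequentially. sv_less cv le (d (s n) x) c"
    using assms(2)[of k]
  proof (rule eventually_mono)
    show "le (d (s n) x) (b k) \<Longrightarrow> sv_less cv le (d (s n) x) c" for n
      using sv_le_less_trans \<open>sv_less cv le (b k) c\<close> by blast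
  qed
qed

lemma cm_Cauchy_geometric_subseq:
  assumes "cm_Cauchy cv le d s" and "sv_less cv le 0 e"
  obtains N where "mono N" and "\<And>k n. N k \<le> n \<Longrightarrow> le (d (s n) (s (N k))) ((1/2) ^ k *\<^sub>R e)"
proof -
  have "\<forall>k. \<exists>M. \<forall>n m. M < n \<and> M < m \<longrightarrow> sv_less cv le (d (s n) (s m)) ((1/2) ^ k *\<^sub>R e)"
    using assms sv_less_scaleR_pos unfolding cm_Cauchy_def by simp
  then obtain f where f: "\<And>k n m. f k < n \<Longrightarrow> f k < m \<Longrightarrow>
      sv_less cv le (d (s n) (s m)) ((1/2) ^ k *\<^sub>R e)"
    by metis
  define N where "N k = Suc (Max (f ` {..k}))" for k
  have "f k < N k" for k unfolding N_def by (simp add: le_imp_less_Suc)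
  moreover have "mono N"
    unfolding N_def by (intro monoI Suc_le_mono[THEN iffD2] Max_mono) auto
  ultimately show ?thesis
    using that f sv_less_imp_le by (meson less_le_trans)
qed

lemma nested_cballs_nonempty_if_cm_complete:
  assumes "cm_complete cv le d" and r: "\<And>n. le 0 (r n)" "cv r 0"
    and nested: "\<And>n. cm_cball le d (c (Suc n)) (r (Suc n)) \<subseteq> cm_cball le d (c n) (r n)"
  shows "(\<Inter>n. cm_cball le d (c n) (r n)) \<noteq> {}"
proof -
  have centre_in: "c m \<in> cm_cball le d (c n) (r n)" if "n \<le> m" for n m
  proof -
    have "cm_cball le d (c m) (r m) \<subseteq> cm_cball le d (c n) (r n)"
      using that nested by (induction m rule: dec_induct) (auto intro: subset_trans)
    moreover have "c m \<in> cm_cball le d (c m) (r m)"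
      using r(1) cm_dist_self unfolding cm_cball_def by simp
    ultimately show ?thesis by blast
  qed
  have "cm_Cauchy cv le d c"
    using cm_Cauchy_if_dist_le_null[OF r(2)] centre_in unfolding cm_cball_def by blast
  then obtain x where x: "cm_tendsto cv le d c x"
    using assms(1) unfolding cm_complete_def by blast
  have "x \<in> cm_cball le d (c n) (r n)" for n
    using cm_cball_closed[OF x] centre_in eventually_sequentially by blast
  then show ?thesis by blast
qed

lemma cm_complete_if_nested_cballs_nonempty:
  assumes nested_balls: "\<And>(c :: nat \<Rightarrow> 'x) r. (\<forall>n. le 0 (r n)) \<Longrightarrow>
      (\<forall>n. cm_cball le d (c (Suc n)) (r (Suc n)) \<subseteq> cm_cball le d (c n) (r n)) \<Longrightarrow>
      cv r 0 \<Longrightarrow> (\<Inter>n. cm_cball le d (c n) (r n)) \<noteq> {}"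
  shows "cm_complete cv le d"
  unfolding cm_complete_def
proof (intro allI impI)
  fix s assume "cm_Cauchy cv le d s"
  obtain e where e: "sv_less cv le 0 e" using sv_less_ex_pos by blast
  obtain N where "mono N" and N: "\<And>k n. N k \<le> n \<Longrightarrow> le (d (s n) (s (N k))) ((1/2) ^ k *\<^sub>R e)"
    using cm_Cauchy_geometric_subseq[OF \<open>cm_Cauchy cv le d s\<close> e] by blast
  define r where "r k = (2 * (1/2::real) ^ k) *\<^sub>R e" for k
  have r_step: "r (Suc k) + (1/2) ^ k *\<^sub>R e = r k" for k
    unfolding r_def by (simp add: scaleR_add_left[symmetric])
  have "cm_cball le d (s (N (Suc k))) (r (Suc k)) \<subseteq> cm_cball le d (s (N k)) (r k)" for k
  proof
    fix y assume "y \<in> cm_cball le d (s (N (Suc k))) (r (Suc k))"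
    moreover have "le (d (s (N (Suc k))) (s (N k))) ((1/2) ^ k *\<^sub>R e)"
      by (rule N, rule monoD[OF \<open>mono N\<close>]) simp
    ultimately have "le (d y (s (N k))) (r (Suc k) + (1/2) ^ k *\<^sub>R e)"
      unfolding cm_cball_def by (simp add: cm_triangle_le)
    then show "y \<in> cm_cball le d (s (N k)) (r k)" unfolding cm_cball_def r_step by simp
  qed
  moreover have "le 0 (r k)" for k
    unfolding r_def using sv_nonneg_scaleR sv_less_imp_le[OF e] by simp
  moreover have "cv r 0"
    unfolding r_def by (intro sv_conv_scaleR_left_zero tendsto_mult_right_zero LIMSEQ_power_zero) simp
  ultimately have "(\<Inter>k. cm_cball le d (s (N k)) (r k)) \<noteq> {}"
    using nested_balls[of r "\<lambda>k. s (N k)"] by blast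
  then obtain x where x: "\<And>k. le (d x (s (N k))) (r k)"
    unfolding cm_cball_def by blast
  have "\<forall>\<^sub>F n in sequentially. le (d (s n) x) ((1/2) ^ k *\<^sub>R e + r k)" for k
    using cm_triangle_le[OF N x[unfolded cm_dist_commute[of x]]] eventually_sequentially by blast
  moreover have "cv (\<lambda>k. (1/2) ^ k *\<^sub>R e + r k) 0"
    unfolding r_def scaleR_add_left[symmetric]
    by (intro sv_conv_scaleR_left_zero tendsto_add_zero tendsto_mult_right_zero LIMSEQ_power_zero) simp_all
  ultimately show "\<exists>x. cm_tendsto cv le d s x"
    using cm_tendsto_if_eventually_le by blast
qed

end

end

theorem theorem9p22:
  fixes cv :: "(nat \<Rightarrow> 'y::real_vector) \<Rightarrow> 'y \<Rightarrow> bool"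
    and le :: "'y \<Rightarrow> 'y \<Rightarrow> bool"
    and d :: "'x \<Rightarrow> 'x \<Rightarrow> 'y"
  assumes "solid_vector_space cv le"
    and "cone_metric le d"
  shows "cm_complete cv le d \<longleftrightarrow>
    (\<forall>(c :: nat \<Rightarrow> 'x) (r :: nat \<Rightarrow> 'y).
        (\<forall>n. le 0 (r n)) \<and>
        (\<forall>n. cm_cball le d (c (Suc n)) (r (Suc n)) \<subseteq> cm_cball le d (c n) (r n)) \<and>
        cv r 0
      \<longrightarrow> (\<Inter>n. cm_cball le d (c n) (r n)) \<noteq> {})"
  using nested_cballs_nonempty_if_cm_complete[OF assms]
    cm_complete_if_nested_cballs_nonempty[OF assms]
  by blast

end
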